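(* Let $K\subset GL(4,\mathbb C)$ be the group generated by $\rho_1=\begin{pmatrix}1&0&0&0\\1&1&0&0\\0&0&1&0\\0&0&1&1\end{pmatrix}$, $\rho_2=\begin{pmatrix}1&0&0&0\\0&1&0&0\\1&0&1&0\\0&1&0&1\end{pmatrix}$, $\rho_3=\begin{pmatrix}1&-2&-2&0\\0&1&0&0\\0&0&1&0\\0&0&0&1\end{pmatrix}$, and let $$\tilde{\mathsf H}_0=\begin{pmatrix}0&2i\sqrt2&2i\sqrt2&0\\-2i\sqrt2&0&0&0\\-2i\sqrt2&0&0&0\\0&0&0&0\end{pmatrix},\qquad \mathsf R_0=\frac1{\sqrt2}\begin{pmatrix}i&0&-i&0\\0&-\frac{1+i}{\sqrt2}&0&-\frac{1-i}{\sqrt2}\\0&\frac{1-i}{\sqrt2}&0&\frac{1+i}{\sqrt2}\\1&0&1&0\end{pmatrix},\qquad \mathsf G=\begin{pmatrix}0&-2&0&2\\2&0&-2&0\\0&2&0&-2\\-2&0&2&0\end{pmatrix}.$$ Then $\mathsf R_0$ is unitary (${}^t\overline{\mathsf R_0}\mathsf R_0=\mathrm{Id}_4$), $\mathsf R_0^{-1}\tilde{\mathsf H}_0\mathsf R_0=\sqrt{-1}\,\mathsf G$, and $\sqrt{-1}\,\mathsf G$ spans the (one-dimensional) real vector space of Hermitian quadratic invariants of the conjugated group $\langle \mathsf R_0^{-1}\rho_1\mathsf R_0,\ \mathsf R_0^{-1}\rho_2\mathsf R_0,\ \mathsf R_0^{-1}\rho_3\mathsf R_0\rangle$, i.e. of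 the Hermitian matrices $Q$ with ${}^t\overline g Q g=Q$ for all $g$ in that group.
   Context: The matrices $\rho_1,\rho_2,\rho_3$ are the images of the loops around $x=0$, $y=0$ and the parabola $16(x-y)^2-8(x+y)+1=0$ under the monodromy representation (w.r.t. a twisted-cycle basis, obtained from the generalised Picard–Lefschetz theorem) of the Horn system $\big(\theta_x^2-x(2\theta_x+2\theta_y+1)(2\theta_x+2\theta_y+2)\big)f=0$, $\big(\theta_y^2-y(2\theta_x+2\theta_y+1)(2\theta_x+2\theta_y+2)\big)f=0$ ($\theta_x=x\partial_x$, $\theta_y=y\partial_y$). $\mathsf G$ is the Gram matrix, with respect to the Euler form, of the derived restrictions to a generic bi-degree $(2,2)$ curve in $\mathbb P^1\times\mathbb P^1$ of the right dual exceptional collection of $(\mathcal O,\mathcal O(1,0),\mathcal O(1,1),\mathcal O(2,1))$. *)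

theory Defs
  imports "HOL-Analysis.Analysis"
begin

text \<open>4x4 complex matrices are rendered as complex^4^4 (HOL-Analysis). Row/column
  indices of type 4 are mapped to 0..3 via Rep_bit0.\<close>

definition idx4 :: "4 \<Rightarrow> nat" where
  "idx4 i = nat (Rep_bit0 i)"

definition mat4 :: "complex list list \<Rightarrow> complex^4^4" where
  "mat4 xss = (\<chi> i j. (xss ! idx4 i) ! idx4 j)"

definition ctrans :: "complex^'n^'n \<Rightarrow> complex^'n^'n" where
  "ctrans M = (\<chi> i j. cnj (M $ j $ i))"

definition smult_mat :: "complex \<Rightarrow> complex^'n^'m \<Rightarrow> complex^'n^'m" where
  "smult_mat c M = (\<chi> i j. c * M $ i $ j)"

inductive_set gen_group :: "(complex^'n^'n) set \<Rightarrow> (complex^'n^'n) set"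
  for S where
  gen_one: "mat 1 \<in> gen_group S"
| gen_mult: "g \<in> S \<Longrightarrow> h \<in> gen_group S \<Longrightarrow> g ** h \<in> gen_group S"
| gen_inv_mult: "g \<in> S \<Longrightarrow> h \<in> gen_group S \<Longrightarrow> matrix_inv g ** h \<in> gen_group S"

definition rho1 :: "complex^4^4" where
  "rho1 = mat4 [[1,0,0,0],[1,1,0,0],[0,0,1,0],[0,0,1,1]]"

definition rho2 :: "complex^4^4" where
  "rho2 = mat4 [[1,0,0,0],[0,1,0,0],[1,0,1,0],[0,1,0,1]]"

definition rho3 :: "complex^4^4" where
  "rho3 = mat4 [[1,-2,-2,0],[0,1,0,0],[0,0,1,0],[0,0,0,1]]"

definition H0 :: "complex^4^4" where
  "H0 = (let a = 2 * \<i> * complex_of_real (sqrt 2) in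
         mat4 [[0,a,a,0],[-a,0,0,0],[-a,0,0,0],[0,0,0,0]])"

definition R0 :: "complex^4^4" where
  "R0 = (let s = complex_of_real (sqrt 2) in
         smult_mat (1 / s)
          (mat4 [[\<i>, 0, -\<i>, 0],
                 [0, -((1 + \<i>) / s), 0, -((1 - \<i>) / s)],
                 [0, (1 - \<i>) / s, 0, (1 + \<i>) / s],
                 [1, 0, 1, 0]]))"

definition Gmat :: "complex^4^4" where
  "Gmat = mat4 [[0,-2,0,2],[2,0,-2,0],[0,2,0,-2],[-2,0,2,0]]"

end

theory Submission
  imports Defs
begin

text \<open>Conjugation by the unitary matrix R0 preserves Hermitian forms and carries
  invariant forms of a group to invariant forms of the conjugated group, so it suffices to
  find the Hermitian forms invariant under rho1, rho2, rho3 themselves. Invariance under a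
  generated group reduces to invariance under the generators, and the three generator
  conditions are a linear system on the entries whose Hermitian solutions are the real
  multiples of H0.\<close>

lemma ctrans_matrix_mult: "ctrans (A ** B) = ctrans B ** ctrans (A :: complex^'n^'n)"
  by (simp add: ctrans_def matrix_matrix_mult_def vec_eq_iff mult.commute)

lemma ctrans_ctrans [simp]: "ctrans (ctrans A) = (A :: complex^'n^'n)"
  by (simp add: ctrans_def vec_eq_iff)

lemma ctrans_mat_1 [simp]: "ctrans (mat 1 :: complex^'n^'n) = mat 1"
  by (auto simp: ctrans_def mat_def vec_eq_iff)

lemma ctrans_smult_mat: "ctrans (smult_mat c A) = smult_mat (cnj c) (ctrans A :: complex^'n^'n)"
  by (simp add: smult_mat_def ctrans_def vec_eq_iff)

lemma smult_mat_matrix_mult_left: "smult_mat c A ** B = smult_mat c (A ** B :: complex^'n^'n)"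
  by (simp add: smult_mat_def matrix_matrix_mult_def vec_eq_iff sum_distrib_left mult.assoc)

lemma smult_mat_matrix_mult_right: "A ** smult_mat c B = smult_mat c (A ** B :: complex^'n^'n)"
  by (simp add: smult_mat_def matrix_matrix_mult_def vec_eq_iff sum_distrib_left mult.left_commute)

lemma matrix_inv_eq_right_inverse:
  fixes A B :: "'a::field^'n^'n"
  assumes "A ** B = mat 1"
  shows "matrix_inv A = B"
proof -
  have BA: "B ** A = mat 1"
    using assms matrix_left_right_inverse by blast
  let ?C = "matrix_inv A"
  have "A ** ?C = mat 1 \<and> ?C ** A = mat 1"
    unfolding matrix_inv_def using assms BA by (rule someI[of _ B, OF conjI])
  then have "?C = ?C ** (A ** B)" "?C ** A = mat 1"
    using assms by auto
  then show ?thesis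
    by (metis matrix_mul_assoc matrix_mul_lid)
qed

lemma invertible_matrix_inv_right:
  fixes A :: "'a::field^'n^'n"
  assumes "invertible A"
  shows "A ** matrix_inv A = mat 1"
  using assms matrix_inv_eq_right_inverse invertible_right_inverse by metis

lemma form_invariant_right_inverse:
  fixes A B Q :: "complex^'n^'n"
  assumes "A ** B = mat 1" and "ctrans A ** Q ** A = Q"
  shows "ctrans B ** Q ** B = Q"
proof -
  have "ctrans B ** Q ** B = ctrans B ** (ctrans A ** Q ** A) ** B"
    using assms(2) by simp
  also have "\<dots> = ctrans (A ** B) ** Q ** (A ** B)"
    by (simp add: ctrans_matrix_mult matrix_mul_assoc)
  finally show ?thesis
    using assms(1) by simp
qed

lemma gen_group_form_invariant:
  fixes Q :: "complex^'n^'n"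
  assumes "\<forall>s\<in>S. invertible s \<and> ctrans s ** Q ** s = Q"
    and "g \<in> gen_group S"
  shows "ctrans g ** Q ** g = Q"
  using assms(2)
proof (induction rule: gen_group.induct)
  case gen_one
  show ?case by simp
next
  case (gen_mult s h)
  have "ctrans (s ** h) ** Q ** (s ** h) = ctrans h ** (ctrans s ** Q ** s) ** h"
    by (simp add: ctrans_matrix_mult matrix_mul_assoc)
  then show ?case
    using gen_mult assms(1) by simp
next
  case (gen_inv_mult s h)
  have "ctrans (matrix_inv s) ** Q ** matrix_inv s = Q"
    using gen_inv_mult(1) assms(1) invertible_matrix_inv_right form_invariant_right_inverse
    by blast
  moreover have "ctrans (matrix_inv s ** h) ** Q ** (matrix_inv s ** h)
      = ctrans h ** (ctrans (matrix_inv s) ** Q ** matrix_inv s) ** h"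
    by (simp add: ctrans_matrix_mult matrix_mul_assoc)
  ultimately show ?case
    using gen_inv_mult.IH by simp
qed

lemma generator_in_gen_group: "s \<in> S \<Longrightarrow> s \<in> gen_group S"
  using gen_group.gen_mult[OF _ gen_group.gen_one] by (metis matrix_mul_rid)

lemma unitary_conj_eq_iff:
  fixes U Q M :: "complex^'n^'n"
  assumes "ctrans U ** U = mat 1"
  shows "U ** Q ** ctrans U = M \<longleftrightarrow> Q = ctrans U ** M ** U"
proof -
  have "U ** ctrans U = mat 1"
    using assms matrix_left_right_inverse by blast
  then show ?thesis
    using assms by (metis matrix_mul_assoc matrix_mul_lid matrix_mul_rid)
qed

lemma unitary_conj_cancel:
  fixes U Q :: "complex^'n^'n"
  assumes "ctrans U ** U = mat 1"
  shows "ctrans U ** (U ** Q ** ctrans U) ** U = Q"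
  using unitary_conj_eq_iff[OF assms, of Q "U ** Q ** ctrans U"] by simp

lemma unitary_conj_form_invariant_iff:
  fixes U X Q :: "complex^'n^'n"
  assumes "ctrans U ** U = mat 1"
  shows "ctrans (ctrans U ** X ** U) ** Q ** (ctrans U ** X ** U) = Q
     \<longleftrightarrow> ctrans X ** (U ** Q ** ctrans U) ** X = U ** Q ** ctrans U"
proof -
  have "ctrans (ctrans U ** X ** U) ** Q ** (ctrans U ** X ** U)
      = ctrans U ** (ctrans X ** (U ** Q ** ctrans U) ** X) ** U"
    by (simp add: ctrans_matrix_mult matrix_mul_assoc)
  then show ?thesis
    using unitary_conj_eq_iff[OF assms, of Q "ctrans X ** (U ** Q ** ctrans U) ** X"] by auto
qed

lemma unitary_conj_hermitian_iff:
  fixes U Q :: "complex^'n^'n"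
  assumes "ctrans U ** U = mat 1"
  shows "ctrans (U ** Q ** ctrans U) = U ** Q ** ctrans U \<longleftrightarrow> ctrans Q = Q"
proof -
  have "ctrans (U ** Q ** ctrans U) = U ** ctrans Q ** ctrans U"
    by (simp add: ctrans_matrix_mult matrix_mul_assoc)
  then show ?thesis
    by (simp only: unitary_conj_eq_iff[OF assms] unitary_conj_cancel[OF assms])
qed

lemma unitary_conj_gen_group_hermitian_invariants:
  fixes U H :: "complex^'n^'n"
  assumes U: "ctrans U ** U = mat 1"
    and S: "\<forall>X\<in>S. invertible X"
    and invariants_S: "\<And>M. ctrans M = M \<and> (\<forall>X\<in>S. ctrans X ** M ** X = M)
      \<longleftrightarrow> M \<in> range (\<lambda>r::real. smult_mat (complex_of_real r) H)"
  shows "{Q. ctrans Q = Q \<and> (\<forall>g\<in>gen_group ((\<lambda>X. ctrans U ** X ** U) ` S).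
            ctrans g ** Q ** g = Q)}
       = range (\<lambda>r::real. smult_mat (complex_of_real r) (ctrans U ** H ** U))"
proof -
  have "U ** ctrans U = mat 1"
    using U matrix_left_right_inverse by blast
  then have "invertible U" "invertible (ctrans U)"
    using U invertible_def by blast+
  then have conj_invertible: "invertible (ctrans U ** X ** U)" if "X \<in> S" for X
    using S that invertible_mult by blast
  have group_iff: "(\<forall>g\<in>gen_group ((\<lambda>X. ctrans U ** X ** U) ` S). ctrans g ** Q ** g = Q)
      \<longleftrightarrow> (\<forall>X\<in>S. ctrans X ** (U ** Q ** ctrans U) ** X = U ** Q ** ctrans U)" for Q
  proof
    assume "\<forall>g\<in>gen_group ((\<lambda>X. ctrans U ** X ** U) ` S). ctrans g ** Q ** g = Q"
    then have "\<forall>X\<in>S. ctrans (ctrans U ** X ** U) ** Q ** (ctrans U ** X ** U) = Q"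
      by (simp add: generator_in_gen_group)
    then show "\<forall>X\<in>S. ctrans X ** (U ** Q ** ctrans U) ** X = U ** Q ** ctrans U"
      by (simp add: unitary_conj_form_invariant_iff[OF U])
  next
    assume "\<forall>X\<in>S. ctrans X ** (U ** Q ** ctrans U) ** X = U ** Q ** ctrans U"
    then have "\<forall>s\<in>(\<lambda>X. ctrans U ** X ** U) ` S. invertible s \<and> ctrans s ** Q ** s = Q"
      by (simp add: conj_invertible unitary_conj_form_invariant_iff[OF U])
    then show "\<forall>g\<in>gen_group ((\<lambda>X. ctrans U ** X ** U) ` S). ctrans g ** Q ** g = Q"
      using gen_group_form_invariant by blast
  qed
  have range_iff: "U ** Q ** ctrans U \<in> range (\<lambda>r::real. smult_mat (complex_of_real r) H)
      \<longleftrightarrow> Q \<in> range (\<lambda>r::real. smult_mat (complex_of_real r) (ctrans U ** H ** U))" for Q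
    using unitary_conj_eq_iff[OF U]
    by (simp add: image_iff smult_mat_matrix_mult_left smult_mat_matrix_mult_right)
  show ?thesis (is "?L = ?R")
  proof (rule set_eqI)
    fix Q :: "complex^'n^'n"
    let ?M = "U ** Q ** ctrans U"
    have "Q \<in> ?L \<longleftrightarrow> ctrans ?M = ?M \<and> (\<forall>X\<in>S. ctrans X ** ?M ** X = ?M)"
      by (simp only: mem_Collect_eq group_iff unitary_conj_hermitian_iff[OF U])
    also have "\<dots> \<longleftrightarrow> ?M \<in> range (\<lambda>r::real. smult_mat (complex_of_real r) H)"
      by (rule invariants_S)
    also have "\<dots> \<longleftrightarrow> Q \<in> ?R"
      by (rule range_iff)
    finally show "Q \<in> ?L \<longleftrightarrow> Q \<in> ?R" .
  qed
qed

text \<open>In the index type 4 the numeral 4 is 0, so \<open>M$4$j\<close> is the first row of a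
  \<open>mat4\<close> list and \<open>M$i$j\<close> for \<open>i, j \<in> {1,2,3}\<close> are the remaining rows and columns.\<close>

lemma idx4_numerals: "idx4 1 = 1" "idx4 2 = 2" "idx4 3 = 3" "idx4 4 = 0"
  unfolding idx4_def by (simp_all add: bit0.Rep_numeral bit0.Rep_1)

lemma mat4_nth: "mat4 xss $ i $ j = xss ! idx4 i ! idx4 j"
  by (simp add: mat4_def)

lemmas mat4_simps = vec_eq_iff forall_4 matrix_matrix_mult_def sum_4 mat4_nth idx4_numerals
  ctrans_def smult_mat_def mat_def

definition root2 :: complex where
  "root2 = complex_of_real (sqrt 2)"

lemma root2_squared: "root2 * root2 = 2"
  unfolding root2_def by (simp flip: of_real_mult)

lemma root2_mult_root2: "root2 * (root2 * x) = 2 * x"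
  by (simp add: mult.assoc[symmetric] root2_squared)

lemma cnj_root2 [simp]: "cnj root2 = root2"
  unfolding root2_def by simp

lemma divide_root2: "x / root2 = x * root2 / 2"
  unfolding root2_def by (simp add: field_simps flip: of_real_mult)

lemma R0_entries:
  "R0 = mat4 [[\<i> * root2 / 2, 0, -\<i> * root2 / 2, 0],
              [0, -((1 + \<i>) / 2), 0, -((1 - \<i>) / 2)],
              [0, (1 - \<i>) / 2, 0, (1 + \<i>) / 2],
              [root2 / 2, 0, root2 / 2, 0]]"
  unfolding R0_def Let_def root2_def[symmetric] divide_root2
  by (simp add: mat4_simps algebra_simps root2_squared root2_mult_root2)

lemma H0_entries:
  "H0 = mat4 [[0, 2 * \<i> * root2, 2 * \<i> * root2, 0],
              [-(2 * \<i> * root2), 0, 0, 0],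
              [-(2 * \<i> * root2), 0, 0, 0],
              [0, 0, 0, 0]]"
  unfolding H0_def Let_def root2_def by simp

lemma R0_unitary: "ctrans R0 ** R0 = mat 1"
  unfolding R0_entries
  by (simp add: mat4_simps algebra_simps root2_squared root2_mult_root2) (simp add: complex_eq_iff)

lemma R0_conj_H0: "ctrans R0 ** H0 ** R0 = smult_mat \<i> Gmat"
  unfolding R0_entries H0_entries Gmat_def
  by (simp add: mat4_simps algebra_simps root2_squared root2_mult_root2) (simp add: complex_eq_iff)

lemma rho_invertible: "invertible rho1" "invertible rho2" "invertible rho3"
proof -
  have "rho1 ** mat4 [[1,0,0,0],[-1,1,0,0],[0,0,1,0],[0,0,-1,1]] = mat 1"
       "rho2 ** mat4 [[1,0,0,0],[0,1,0,0],[-1,0,1,0],[0,-1,0,1]] = mat 1"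
       "rho3 ** mat4 [[1,2,2,0],[0,1,0,0],[0,0,1,0],[0,0,0,1]] = mat 1"
    unfolding rho1_def rho2_def rho3_def by (simp_all add: mat4_simps)
  then show "invertible rho1" "invertible rho2" "invertible rho3"
    using invertible_right_inverse by blast+
qed

lemma rho_preserve_H0:
  "ctrans rho1 ** H0 ** rho1 = H0"
  "ctrans rho2 ** H0 ** rho2 = H0"
  "ctrans rho3 ** H0 ** rho3 = H0"
  unfolding rho1_def rho2_def rho3_def H0_entries by (simp_all add: mat4_simps)

lemma ctrans_H0: "ctrans H0 = H0"
  unfolding H0_entries by (simp add: mat4_simps)

lemma rho1_invariant_entries:
  assumes "ctrans rho1 ** M ** rho1 = M"
  shows "M$1$1 = 0" "M$1$3 = 0" "M$3$1 = 0" "M$3$3 = 0"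
    "M$3$4 + M$2$1 = 0" "M$1$4 + M$4$1 = 0"
proof -
  have entry: "(ctrans rho1 ** M ** rho1) $ i $ j = M $ i $ j" for i j
    using assms by simp
  note expand = rho1_def mat4_simps algebra_simps
  show "M$1$1 = 0" using entry[of 4 1] by (simp add: expand)
  show "M$1$3 = 0" using entry[of 4 3] by (simp add: expand)
  show "M$3$1 = 0" using entry[of 2 1] by (simp add: expand)
  show "M$3$3 = 0" using entry[of 2 3] by (simp add: expand)
  show "M$3$4 + M$2$1 = 0" using entry[of 2 4] entry[of 2 1] by (simp add: expand)
  show "M$1$4 + M$4$1 = 0" using entry[of 4 4] entry[of 4 1] by (simp add: expand)
qed

lemma rho2_invariant_entries:
  assumes "ctrans rho2 ** M ** rho2 = M"
  shows "M$2$2 = 0" "M$2$3 = 0" "M$3$2 = 0" "M$3$4 + M$1$2 = 0"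
proof -
  have entry: "(ctrans rho2 ** M ** rho2) $ i $ j = M $ i $ j" for i j
    using assms by simp
  note expand = rho2_def mat4_simps algebra_simps
  show "M$2$2 = 0" using entry[of 4 2] by (simp add: expand)
  show "M$2$3 = 0" using entry[of 4 3] by (simp add: expand)
  show "M$3$2 = 0" using entry[of 1 2] by (simp add: expand)
  show "M$3$4 + M$1$2 = 0" using entry[of 1 4] entry[of 4 3] entry[of 1 2] by (simp add: expand)
qed

lemma rho3_invariant_entries:
  assumes "ctrans rho3 ** M ** rho3 = M"
  shows "M$4$4 = 0" "M$3$4 = 0" "M$4$3 = 0" "M$4$2 + M$1$4 = 0" "M$4$1 + M$2$4 = 0"
proof -
  have entry: "(ctrans rho3 ** M ** rho3) $ i $ j = M $ i $ j" for i j
    using assms by simp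
  note expand = rho3_def mat4_simps algebra_simps
  show "M$4$4 = 0" using entry[of 4 1] by (simp add: expand)
  show "M$3$4 = 0" using entry[of 3 1] by (simp add: expand)
  show "M$4$3 = 0" using entry[of 1 3] by (simp add: expand)
  have "2 * (M$4$2 + M$1$4) = 0" using entry[of 1 2] entry[of 4 1] by (simp add: expand)
  then show "M$4$2 + M$1$4 = 0" by (metis mult_eq_0_iff zero_neq_numeral)
  have "2 * (M$4$1 + M$2$4) = 0" using entry[of 2 1] entry[of 4 1] by (simp add: expand)
  then show "M$4$1 + M$2$4 = 0" by (metis mult_eq_0_iff zero_neq_numeral)
qed

lemma hermitian_rho_invariant_eq_smult_H0:
  assumes herm: "ctrans M = M"
    and inv1: "ctrans rho1 ** M ** rho1 = M"
    and inv2: "ctrans rho2 ** M ** rho2 = M"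
    and inv3: "ctrans rho3 ** M ** rho3 = M"
  shows "M = smult_mat (complex_of_real (Im (M$4$1) / (2 * sqrt 2))) H0"
proof -
  note e1 = rho1_invariant_entries[OF inv1]
    and e2 = rho2_invariant_entries[OF inv2]
    and e3 = rho3_invariant_entries[OF inv3]
  have zeros: "M$1$1 = 0" "M$1$2 = 0" "M$1$3 = 0" "M$2$1 = 0" "M$2$2 = 0" "M$2$3 = 0"
      "M$3$1 = 0" "M$3$2 = 0" "M$3$3 = 0" "M$3$4 = 0" "M$4$3 = 0" "M$4$4 = 0"
    using e1 e2 e3 by simp_all
  have opposite: "M$1$4 = - M$4$1" "M$4$2 = M$4$1" "M$2$4 = - M$4$1"
    using e1(6) e3(4,5) by algebra+
  have "cnj (M$4$1) = M$1$4"
    using arg_cong[OF herm, of "\<lambda>A. A$1$4"] by (simp add: ctrans_def)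
  with opposite(1) have "Re (M$4$1) = 0"
    by (simp add: complex_eq_iff)
  then have "M$4$1 = complex_of_real (Im (M$4$1) / (2 * sqrt 2)) * (2 * \<i> * root2)"
    unfolding root2_def by (simp add: complex_eq_iff)
  then show ?thesis
    unfolding H0_entries using zeros opposite by (simp add: mat4_simps)
qed

lemma hermitian_rho_invariant_iff:
  "ctrans M = M \<and> (\<forall>X\<in>{rho1, rho2, rho3}. ctrans X ** M ** X = M)
    \<longleftrightarrow> M \<in> range (\<lambda>r::real. smult_mat (complex_of_real r) H0)"
proof
  assume "ctrans M = M \<and> (\<forall>X\<in>{rho1, rho2, rho3}. ctrans X ** M ** X = M)"
  then show "M \<in> range (\<lambda>r::real. smult_mat (complex_of_real r) H0)"
    using hermitian_rho_invariant_eq_smult_H0 by blast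
next
  assume "M \<in> range (\<lambda>r::real. smult_mat (complex_of_real r) H0)"
  then obtain r :: real where "M = smult_mat (complex_of_real r) H0"
    by blast
  then show "ctrans M = M \<and> (\<forall>X\<in>{rho1, rho2, rho3}. ctrans X ** M ** X = M)"
    using ctrans_H0 rho_preserve_H0
    by (simp add: ctrans_smult_mat smult_mat_matrix_mult_left smult_mat_matrix_mult_right)
qed

theorem proposition4p2:
  shows "ctrans R0 ** R0 = mat 1 \<and>
         matrix_inv R0 ** H0 ** R0 = smult_mat \<i> Gmat \<and>
         {Q. ctrans Q = Q \<and>
             (\<forall>g \<in> gen_group {matrix_inv R0 ** rho1 ** R0,
                                 matrix_inv R0 ** rho2 ** R0,
                                 matrix_inv R0 ** rho3 ** R0}.
                ctrans g ** Q ** g = Q)}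
         = (\<lambda>r::real. smult_mat (complex_of_real r) (smult_mat \<i> Gmat)) ` UNIV"
proof -
  have R0_inv: "matrix_inv R0 = ctrans R0"
    using R0_unitary matrix_inv_eq_right_inverse matrix_left_right_inverse by blast
  have generators: "{ctrans R0 ** rho1 ** R0, ctrans R0 ** rho2 ** R0, ctrans R0 ** rho3 ** R0}
      = (\<lambda>X. ctrans R0 ** X ** R0) ` {rho1, rho2, rho3}"
    by simp
  have "{Q. ctrans Q = Q \<and> (\<forall>g \<in> gen_group ((\<lambda>X. ctrans R0 ** X ** R0) ` {rho1, rho2, rho3}).
            ctrans g ** Q ** g = Q)}
      = range (\<lambda>r::real. smult_mat (complex_of_real r) (ctrans R0 ** H0 ** R0))"
    using R0_unitary rho_invertible hermitian_rho_invariant_iff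
    by (intro unitary_conj_gen_group_hermitian_invariants) auto
  then show ?thesis
    unfolding R0_inv generators R0_conj_H0 using R0_unitary by blast
qed

end
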